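(* Let $(\Omega,\mathbb B(\Omega),\mu,T)$ be a measure-preserving dynamical system and $\mathbf X$ an $\mathbb R^N$-valued random vector on $(\Omega,\mathbb B(\Omega))$ such that $h_\mu(T)=\lim_{d\to\infty}h_\mu(T,\mathcal P^{\mathbf X}(d))$, and such that either (a) there is $d_0\in\mathbb N$ with $h^{\mathbf X}_\mu(T,d)\ge h^{\mathbf X}_\mu(T,d+1)$ for all $d\ge d_0$, or (b) $\lim_{d\to\infty}h^{\mathbf X}_{\mu,\triangle}(T,d)$ exists. If $h_\mu(T)=\limsup_{d\to\infty}h^{\mathbf X}_\mu(T,d)$, then $h_\mu(T)=\limsup_{d\to\infty}h^{\mathbf X}_{\mu,\mathrm{cond}}(T,d)$.
   Context: A measure-preserving dynamical system $(\Omega,\mathbb B(\Omega),\mu,T)$ consists of a nonempty topological space $\Omega$ with Borel $\sigma$-algebra $\mathbb B(\Omega)$, a probability measure $\mu$, and a measurable map $T:\Omega\to\Omega$ with $\mu(T^{-1}B)=\mu(B)$ for all $B\in\mathbb B(\Omega)$. For a finite partition $\mathcal P=\{P_0,\dots,P_l\}\subset\mathbb B(\Omega)$ of $\Omega$: $H(\mathcal P)=-\sum_{P\in\mathcal P}\mu(P)\ln\mu(P)$ (with $0\ln0=0$); $\mathcal P_n$ is the partition consisting of the sets $P_{a_0}\cap T^{-1}(P_{a_1})\cap\dots\cap T^{-(n-1)}(P_{a_{n-1}})$, $a_i\in\{0,\dots,l\}$; $h_\mu(T,\mathcal P)=\lim_{n\to\infty}(H(\mathcal P_{n+1})-H(\mathcal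 P_n))$; the Kolmogorov–Sinai entropy is $h_\mu(T)=\sup_{\mathcal P}h_\mu(T,\mathcal P)$ over finite partitions. Let $\Pi_d$ be the set of permutations of $\{0,1,\dots,d\}$. A vector $(x_0,\dots,x_d)\in\mathbb R^{d+1}$ has ordinal pattern $\pi=(r_0,\dots,r_d)\in\Pi_d$ if $x_{r_0}\ge x_{r_1}\ge\dots\ge x_{r_d}$ and $r_{l-1}>r_l$ whenever $x_{r_{l-1}}=x_{r_l}$. For a random vector $\mathbf X=(X_1,\dots,X_N)$ and $d\in\mathbb N$, the ordinal partition $\mathcal P^{\mathbf X}(d)$ consists of the sets $P_{(\pi_1,\dots,\pi_N)}=\{\omega: (X_i(T^{d}\omega),X_i(T^{d-1}\omega),\dots,X_i(T\omega),X_i(\omega))\text{ has ordinal pattern }\pi_i\text{ for } i=1,\dots,N\}$, $\pi_i\in\Pi_d$. Permutation entropy: $h^{\mathbf X}_\mu(T,d)=\frac1d H(\mathcal P^{\mathbf X}(d))$. Sorting entropy: $h^{\mathbf X}_{\mu,\triangle}(T,d)=H(\mathcal P^{\mathbf X}(d+1))-H(\mathcal P^{\mathbf X}(d))$. Conditional entropy of ordinal patterns: $h^{\mathbf X}_{\mu,\mathrm{cond}}(T,d)=H(\mathcal P^{\mathbf X}(d)_2)-H(\mathcal P^{\mathbf X}(d))$. *)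

theory Defs
  imports "HOL-Probability.Probability"
begin

definition mpds :: "'a::topological_space measure \<Rightarrow> ('a \<Rightarrow> 'a) \<Rightarrow> bool" where
  "mpds M T \<longleftrightarrow> prob_space M \<and> sets M = sets borel \<and> T \<in> measurable M M \<and>
     (\<forall>B \<in> sets M. measure M (T -` B \<inter> space M) = measure M B)"

definition finite_partition :: "'a measure \<Rightarrow> 'a set set \<Rightarrow> bool" where
  "finite_partition M P \<longleftrightarrow> finite P \<and> P \<subseteq> sets M \<and> disjoint P \<and> \<Union>P = space M"

definition part_entropy :: "'a measure \<Rightarrow> 'a set set \<Rightarrow> real" where
  "part_entropy M P = - (\<Sum>A\<in>P. if measure M A = 0 then 0 else measure M A * ln (measure M A))"

definition refine_part :: "'a measure \<Rightarrow> ('a \<Rightarrow> 'a) \<Rightarrow> 'a set set \<Rightarrow> nat \<Rightarrow> 'a set set" where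
  "refine_part M T P n = {(\<Inter>j<n. (T ^^ j) -` (a j)) \<inter> space M | a. \<forall>j<n. a j \<in> P}"

definition ent_rel :: "'a measure \<Rightarrow> ('a \<Rightarrow> 'a) \<Rightarrow> 'a set set \<Rightarrow> real" where
  "ent_rel M T P = lim (\<lambda>n. part_entropy M (refine_part M T P (Suc n)) - part_entropy M (refine_part M T P n))"

definition KS_entropy :: "'a measure \<Rightarrow> ('a \<Rightarrow> 'a) \<Rightarrow> ereal" where
  "KS_entropy M T = (SUP P \<in> {P. finite_partition M P}. ereal (ent_rel M T P))"

definition perms :: "nat \<Rightarrow> nat list set" where
  "perms d = {r. distinct r \<and> set r = {0..d}}"

definition has_ord_pattern :: "(nat \<Rightarrow> real) \<Rightarrow> nat \<Rightarrow> nat list \<Rightarrow> bool" where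
  "has_ord_pattern x d r \<longleftrightarrow> r \<in> perms d \<and>
     (\<forall>l\<in>{1..d}. x (r ! (l - 1)) \<ge> x (r ! l) \<and>
                 (x (r ! (l - 1)) = x (r ! l) \<longrightarrow> r ! (l - 1) > r ! l))"

definition ord_part :: "'a measure \<Rightarrow> ('a \<Rightarrow> 'a) \<Rightarrow> ('n::finite \<Rightarrow> 'a \<Rightarrow> real) \<Rightarrow> nat \<Rightarrow> 'a set set" where
  "ord_part M T X d =
     {{\<omega> \<in> space M. \<forall>i. has_ord_pattern (\<lambda>k. X i ((T ^^ (d - k)) \<omega>)) d (\<pi> i)} | \<pi>.
        \<forall>i. \<pi> i \<in> perms d}"

definition perm_entropy :: "'a measure \<Rightarrow> ('a \<Rightarrow> 'a) \<Rightarrow> ('n::finite \<Rightarrow> 'a \<Rightarrow> real) \<Rightarrow> nat \<Rightarrow> real" where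
  "perm_entropy M T X d = part_entropy M (ord_part M T X d) / real d"

definition sorting_entropy :: "'a measure \<Rightarrow> ('a \<Rightarrow> 'a) \<Rightarrow> ('n::finite \<Rightarrow> 'a \<Rightarrow> real) \<Rightarrow> nat \<Rightarrow> real" where
  "sorting_entropy M T X d = part_entropy M (ord_part M T X (Suc d)) - part_entropy M (ord_part M T X d)"

definition cond_entropy :: "'a measure \<Rightarrow> ('a \<Rightarrow> 'a) \<Rightarrow> ('n::finite \<Rightarrow> 'a \<Rightarrow> real) \<Rightarrow> nat \<Rightarrow> real" where
  "cond_entropy M T X d = part_entropy M (refine_part M T (ord_part M T X d) 2) - part_entropy M (ord_part M T X d)"

end

theory Submission
  imports Defs "HOL-Library.List_Lexorder"
begin

text \<open>Write \<open>H\<^sub>d\<close> for the entropy of the ordinal partition \<open>P(d)\<close>. For any finite partition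
  the increments \<open>H(P\<^sub>n\<^sub>+\<^sub>1) - H(P\<^sub>n)\<close> are conditional entropies of the present given a
  growing future, hence nonincreasing, so \<open>h(T, P(d))\<close> is at most the increment at \<open>n = 1\<close>, the
  conditional entropy of ordinal patterns; with the generating hypothesis this gives
  \<open>h(T) \<le> limsup\<close> of the conditional entropies. Conversely, the ordinal pattern of a window of
  length \<open>d + 2\<close> determines the patterns of both windows of length \<open>d + 1\<close> inside it, so
  \<open>P(d)\<^sub>2\<close> is coarser than \<open>P(d + 1)\<close> and the conditional entropy is at most the sorting
  entropy \<open>H\<^sub>d\<^sub>+\<^sub>1 - H\<^sub>d\<close>. Under (a) the sorting entropy is eventually at most the
  permutation entropy \<open>H\<^sub>d / d\<close>; under (b) the permutation entropy, a Cesaro mean of sorting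
  entropies, has the same limit. Either way the limsup of the sorting entropies is at most that of
  the permutation entropies, which is \<open>h(T)\<close>.\<close>

section \<open>The log-sum inequality\<close>

definition log_sum_term :: "real \<Rightarrow> real \<Rightarrow> real" where
  "log_sum_term a b = a * ln b - a * ln a"

lemma log_sum_term_nonneg:
  assumes "0 \<le> a" "a \<le> b"
  shows "0 \<le> log_sum_term a b"
proof (cases "a = 0")
  case False
  then have "ln a \<le> ln b" using assms by simp
  then show ?thesis unfolding log_sum_term_def using assms(1)
    by (metis mult_left_mono right_diff_distrib diff_ge_0_iff_ge)
qed (simp add: log_sum_term_def)

text \<open>Each term is bounded using the tangent line of \<open>ln\<close> at \<open>B / A\<close>.\<close>
lemma log_sum_inequality:
  assumes fin: "finite S" and nn: "\<And>s. s \<in> S \<Longrightarrow> 0 \<le> a s" and le: "\<And>s. s \<in> S \<Longrightarrow> a s \<le> b s"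
  shows "(\<Sum>s\<in>S. log_sum_term (a s) (b s)) \<le> log_sum_term (\<Sum>s\<in>S. a s) (\<Sum>s\<in>S. b s)"
proof -
  define A where "A = (\<Sum>s\<in>S. a s)"
  define B where "B = (\<Sum>s\<in>S. b s)"
  have "A \<ge> 0" unfolding A_def using nn by (simp add: sum_nonneg)
  moreover have "A \<le> B" unfolding A_def B_def using le by (simp add: sum_mono)
  ultimately consider "A = 0" | "0 < A" "0 < B" by linarith
  then show ?thesis
  proof cases
    case 1
    then have "\<forall>s\<in>S. a s = 0" using sum_nonneg_eq_0_iff[OF fin] nn unfolding A_def by blast
    then show ?thesis using 1 unfolding A_def log_sum_term_def by simp
  next
    case 2
    have tangent: "log_sum_term (a s) (b s) - a s * (ln B - ln A) \<le> (A / B) * b s - a s"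
      if s: "s \<in> S" for s
    proof (cases "a s = 0")
      case True
      then show ?thesis using nn[OF s] le[OF s] 2 by (simp add: log_sum_term_def)
    next
      case False
      then have as: "a s > 0" using nn[OF s] by simp
      then have bs: "b s > 0" using le[OF s] by simp
      have "ln (b s) + ln A - ln (a s) - ln B = ln (b s * A / (a s * B))"
        using as bs 2 by (simp add: ln_div ln_mult)
      also have "\<dots> \<le> b s * A / (a s * B) - 1"
        using as bs 2 by (intro ln_le_minus_one) simp
      finally have "a s * (ln (b s) + ln A - ln (a s) - ln B) \<le> a s * (b s * A / (a s * B) - 1)"
        using as by (simp add: mult_left_mono)
      also have "\<dots> = (A / B) * b s - a s" using as 2 by (simp add: field_simps)
      finally show ?thesis unfolding log_sum_term_def by (simp add: algebra_simps)
    qed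
    have "(\<Sum>s\<in>S. log_sum_term (a s) (b s) - a s * (ln B - ln A)) \<le> (\<Sum>s\<in>S. (A / B) * b s - a s)"
      using tangent by (simp add: sum_mono)
    also have "\<dots> = (A / B) * B - A" by (simp add: sum_subtractf sum_distrib_left B_def A_def)
    also have "\<dots> = 0" using 2 by simp
    finally have "(\<Sum>s\<in>S. log_sum_term (a s) (b s)) \<le> A * (ln B - ln A)"
      by (simp add: sum_subtractf sum_distrib_right[symmetric] A_def[symmetric])
    then show ?thesis unfolding log_sum_term_def A_def[symmetric] B_def[symmetric]
      by (simp add: algebra_simps)
  qed
qed

section \<open>Entropy of simple functions\<close>

definition simple_entropy :: "'a measure \<Rightarrow> ('a \<Rightarrow> 'b) \<Rightarrow> real" where
  "simple_entropy M g = - (\<Sum>l\<in>g ` space M.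
     measure M (g -` {l} \<inter> space M) * ln (measure M (g -` {l} \<inter> space M)))"

definition cond_simple_entropy :: "'a measure \<Rightarrow> ('a \<Rightarrow> 'b) \<Rightarrow> ('a \<Rightarrow> 'c) \<Rightarrow> real" where
  "cond_simple_entropy M q s = simple_entropy M (\<lambda>\<omega>. (q \<omega>, s \<omega>)) - simple_entropy M s"

lemma simple_entropy_eq_sum_superset:
  assumes "finite L" "g ` space M \<subseteq> L"
  shows "simple_entropy M g =
    - (\<Sum>l\<in>L. measure M (g -` {l} \<inter> space M) * ln (measure M (g -` {l} \<inter> space M)))"
proof -
  have "g -` {l} \<inter> space M = {}" if "l \<notin> g ` space M" for l using that by auto
  then show ?thesis unfolding simple_entropy_def
    by (intro arg_cong[where f=uminus] sum.mono_neutral_left) (use assms in auto)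
qed

lemma part_entropy_fibers:
  assumes "finite L" "g ` space M \<subseteq> L"
  shows "part_entropy M ((\<lambda>l. g -` {l} \<inter> space M) ` L) = simple_entropy M g"
proof -
  let ?F = "\<lambda>l. g -` {l} \<inter> space M"
  have "(\<Sum>A\<in>?F ` L. if measure M A = 0 then 0 else measure M A * ln (measure M A))
     = (\<Sum>A\<in>?F ` L. measure M A * ln (measure M A))"
    by (rule sum.cong) auto
  also have "\<dots> = (\<Sum>l\<in>L. measure M (?F l) * ln (measure M (?F l)))"
  proof (subst sum.reindex_nontrivial[OF assms(1)])
    fix l l' assume "l \<noteq> l'" "?F l = ?F l'"
    then have "?F l = {}" by auto
    then show "measure M (?F l) * ln (measure M (?F l)) = 0" by simp
  qed simp
  finally show ?thesis
    unfolding part_entropy_def simple_entropy_eq_sum_superset[OF assms] by simp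
qed

lemma simple_entropy_cong:
  assumes "\<And>\<omega>. \<omega> \<in> space M \<Longrightarrow> g \<omega> = g' \<omega>"
  shows "simple_entropy M g = simple_entropy M g'"
proof -
  have "g ` space M = g' ` space M" using assms by auto
  moreover have "g -` {l} \<inter> space M = g' -` {l} \<inter> space M" for l using assms by auto
  ultimately show ?thesis unfolding simple_entropy_def by simp
qed

lemma simple_entropy_comp_inj:
  assumes "inj_on h (g ` space M)"
  shows "simple_entropy M (\<lambda>\<omega>. h (g \<omega>)) = simple_entropy M g"
proof -
  have "(\<lambda>\<omega>. h (g \<omega>)) ` space M = h ` g ` space M" by auto
  moreover have "(\<lambda>\<omega>. h (g \<omega>)) -` {h l} \<inter> space M = g -` {l} \<inter> space M"
    if "l \<in> g ` space M" for l
    using assms that unfolding inj_on_def by auto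
  ultimately show ?thesis unfolding simple_entropy_def
    by (simp add: sum.reindex[OF assms])
qed

lemma measure_UN_fibers:
  assumes "finite_measure M" "simple_function M g" "finite B"
  shows "measure M (\<Union>b\<in>B. g -` {b} \<inter> space M) = (\<Sum>b\<in>B. measure M (g -` {b} \<inter> space M))"
proof (rule measure_finite_Union)
  show "(\<lambda>b. g -` {b} \<inter> space M) ` B \<subseteq> sets M" using simple_functionD(2)[OF assms(2)] by auto
  show "disjoint_family_on (\<lambda>b. g -` {b} \<inter> space M) B" unfolding disjoint_family_on_def by auto
qed (use assms finite_measure.emeasure_finite in auto)

lemma measure_fiber_Pair_le:
  assumes "finite_measure M" "simple_function M s"
  shows "measure M ((\<lambda>\<omega>. (q \<omega>, s \<omega>)) -` {(a, b)} \<inter> space M) \<le> measure M (s -` {b} \<inter> space M)"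
  using assms simple_functionD(2)[OF assms(2)] by (intro finite_measure.finite_measure_mono) auto

lemma cond_simple_entropy_eq_sum:
  assumes M: "finite_measure M" and q: "simple_function M q" and s: "simple_function M s"
  shows "cond_simple_entropy M q s =
    (\<Sum>b\<in>s ` space M. \<Sum>a\<in>q ` space M.
       log_sum_term (measure M ((\<lambda>\<omega>. (q \<omega>, s \<omega>)) -` {(a, b)} \<inter> space M))
                    (measure M (s -` {b} \<inter> space M)))"
proof -
  let ?p = "\<lambda>\<omega>. (q \<omega>, s \<omega>)"
  define Q where "Q = q ` space M"
  define S where "S = s ` space M"
  define x where "x a b = measure M (?p -` {(a, b)} \<inter> space M)" for a b
  define y where "y b = measure M (s -` {b} \<inter> space M)" for b
  have fin: "finite Q" "finite S" using q s simple_functionD(1) unfolding Q_def S_def by auto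
  have marginal: "y b = (\<Sum>a\<in>Q. x a b)" for b
  proof -
    have "s -` {b} \<inter> space M = (\<Union>l\<in>Q \<times> {b}. ?p -` {l} \<inter> space M)" unfolding Q_def by auto
    then have "y b = (\<Sum>l\<in>Q \<times> {b}. measure M (?p -` {l} \<inter> space M))"
      unfolding y_def using measure_UN_fibers[OF M simple_function_Pair[OF q s]] fin by simp
    also have "\<dots> = (\<Sum>a\<in>Q. x a b)" unfolding x_def
      by (rule sum.reindex_bij_witness[where i="\<lambda>a. (a, b)" and j=fst]) auto
    finally show ?thesis .
  qed
  have "simple_entropy M ?p =
      - (\<Sum>l\<in>Q \<times> S. measure M (?p -` {l} \<inter> space M) * ln (measure M (?p -` {l} \<inter> space M)))"
    by (rule simple_entropy_eq_sum_superset) (use fin Q_def S_def in auto)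
  also have "\<dots> = - (\<Sum>a\<in>Q. \<Sum>b\<in>S. x a b * ln (x a b))"
    unfolding x_def sum.cartesian_product by (simp add: case_prod_beta)
  also have "\<dots> = - (\<Sum>b\<in>S. \<Sum>a\<in>Q. x a b * ln (x a b))"
    by (simp only: sum.swap[of _ Q])
  finally have pair: "simple_entropy M ?p = - (\<Sum>b\<in>S. \<Sum>a\<in>Q. x a b * ln (x a b))" .
  have single: "simple_entropy M s = - (\<Sum>b\<in>S. y b * ln (y b))"
    unfolding simple_entropy_def S_def y_def ..
  have "(\<Sum>a\<in>Q. log_sum_term (x a b) (y b)) = y b * ln (y b) - (\<Sum>a\<in>Q. x a b * ln (x a b))" for b
    unfolding log_sum_term_def by (simp add: sum_subtractf sum_distrib_right[symmetric] marginal[symmetric])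
  then show ?thesis
    unfolding cond_simple_entropy_def pair single Q_def[symmetric] S_def[symmetric] x_def[symmetric] y_def[symmetric]
    by (simp add: sum_subtractf)
qed

lemma cond_simple_entropy_nonneg:
  assumes M: "finite_measure M" and q: "simple_function M q" and s: "simple_function M s"
  shows "0 \<le> cond_simple_entropy M q s"
  unfolding cond_simple_entropy_eq_sum[OF assms]
  by (intro sum_nonneg log_sum_term_nonneg measure_fiber_Pair_le[OF M s] measure_nonneg)

lemma simple_entropy_comp_le:
  assumes M: "finite_measure M" and s: "simple_function M s"
  shows "simple_entropy M (\<lambda>\<omega>. f (s \<omega>)) \<le> simple_entropy M s"
proof -
  have "simple_entropy M (\<lambda>\<omega>. f (s \<omega>)) \<le> simple_entropy M (\<lambda>\<omega>. (s \<omega>, f (s \<omega>)))"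
    using cond_simple_entropy_nonneg[OF M s simple_function_compose1[OF s]]
    unfolding cond_simple_entropy_def by simp
  also have "\<dots> = simple_entropy M s"
    by (rule simple_entropy_comp_inj[where h="\<lambda>b. (b, f b)"]) (auto simp: inj_on_def)
  finally show ?thesis .
qed

text \<open>Summing the cells of \<open>s\<close> inside each cell of \<open>f \<circ> s\<close> is an instance of the
  log-sum inequality.\<close>
lemma cond_simple_entropy_comp_ge:
  assumes M: "finite_measure M" and q: "simple_function M q" and s: "simple_function M s"
  shows "cond_simple_entropy M q s \<le> cond_simple_entropy M q (\<lambda>\<omega>. f (s \<omega>))"
proof -
  let ?p = "\<lambda>\<omega>. (q \<omega>, s \<omega>)"
  let ?pf = "\<lambda>\<omega>. (q \<omega>, f (s \<omega>))"
  define Q where "Q = q ` space M"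
  define S where "S = s ` space M"
  define G where "G c = {b \<in> S. f b = c}" for c
  define x where "x a b = measure M (?p -` {(a, b)} \<inter> space M)" for a b
  define y where "y b = measure M (s -` {b} \<inter> space M)" for b
  have fS: "finite S" using s simple_functionD(1) unfolding S_def by auto
  then have fG: "finite (G c)" for c unfolding G_def by auto
  have img: "(\<lambda>\<omega>. f (s \<omega>)) ` space M = f ` S" unfolding S_def by auto
  have coarse_joint: "measure M (?pf -` {(a, c)} \<inter> space M) = (\<Sum>b\<in>G c. x a b)" for a c
  proof -
    have "?pf -` {(a, c)} \<inter> space M = (\<Union>l\<in>{a} \<times> G c. ?p -` {l} \<inter> space M)"
      unfolding G_def S_def by auto
    then have "measure M (?pf -` {(a, c)} \<inter> space M) = (\<Sum>l\<in>{a} \<times> G c. measure M (?p -` {l} \<inter> space M))"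
      using measure_UN_fibers[OF M simple_function_Pair[OF q s]] fG by simp
    also have "\<dots> = (\<Sum>b\<in>G c. x a b)" unfolding x_def
      by (rule sum.reindex_bij_witness[where i="\<lambda>b. (a, b)" and j=snd]) auto
    finally show ?thesis .
  qed
  have coarse_marginal: "measure M ((\<lambda>\<omega>. f (s \<omega>)) -` {c} \<inter> space M) = (\<Sum>b\<in>G c. y b)" for c
  proof -
    have "(\<lambda>\<omega>. f (s \<omega>)) -` {c} \<inter> space M = (\<Union>b\<in>G c. s -` {b} \<inter> space M)"
      unfolding G_def S_def by auto
    then show ?thesis unfolding y_def using measure_UN_fibers[OF M s] fG by simp
  qed
  have "cond_simple_entropy M q s = (\<Sum>b\<in>S. \<Sum>a\<in>Q. log_sum_term (x a b) (y b))"
    unfolding cond_simple_entropy_eq_sum[OF M q s] S_def Q_def x_def y_def ..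
  also have "\<dots> = (\<Sum>c\<in>f ` S. \<Sum>a\<in>Q. \<Sum>b\<in>G c. log_sum_term (x a b) (y b))"
    unfolding G_def by (simp only: sum.image_gen[OF fS, symmetric] sum.swap[of _ Q])
  also have "\<dots> \<le> (\<Sum>c\<in>f ` S. \<Sum>a\<in>Q. log_sum_term (\<Sum>b\<in>G c. x a b) (\<Sum>b\<in>G c. y b))"
    unfolding x_def y_def
    by (intro sum_mono log_sum_inequality fG measure_nonneg measure_fiber_Pair_le[OF M s])
  also have "\<dots> = cond_simple_entropy M q (\<lambda>\<omega>. f (s \<omega>))"
    unfolding cond_simple_entropy_eq_sum[OF M q simple_function_compose1[OF s]] img Q_def coarse_joint coarse_marginal ..
  finally show ?thesis .
qed

section \<open>Refinements under a measure-preserving map\<close>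

locale measure_preserving = finite_measure M for M :: "'a measure" +
  fixes T :: "'a \<Rightarrow> 'a"
  assumes T_measurable: "T \<in> measurable M M"
    and measure_vimage: "B \<in> sets M \<Longrightarrow> measure M (T -` B \<inter> space M) = measure M B"
begin

lemma measurable_funpow: "T ^^ n \<in> measurable M M"
  by (induction n) (auto intro: measurable_compose[OF _ T_measurable])

lemma funpow_in_space: "\<omega> \<in> space M \<Longrightarrow> (T ^^ j) \<omega> \<in> space M"
  by (rule measurable_space[OF measurable_funpow])

lemma
  assumes g: "simple_function M g"
  shows simple_function_comp_T: "simple_function M (\<lambda>\<omega>. g (T \<omega>))"
    and simple_entropy_comp_T: "simple_entropy M (\<lambda>\<omega>. g (T \<omega>)) = simple_entropy M g"
proof -
  have fiber: "(\<lambda>\<omega>. g (T \<omega>)) -` {l} \<inter> space M = T -` (g -` {l} \<inter> space M) \<inter> space M" for l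
    using measurable_space[OF T_measurable] by auto
  have img: "(\<lambda>\<omega>. g (T \<omega>)) ` space M \<subseteq> g ` space M"
    using measurable_space[OF T_measurable] by auto
  have fin: "finite (g ` space M)" using simple_functionD(1)[OF g] .
  show "simple_function M (\<lambda>\<omega>. g (T \<omega>))"
    unfolding simple_function_def fiber
    using finite_subset[OF img fin] measurable_sets[OF T_measurable simple_functionD(2)[OF g]] by auto
  have "measure M ((\<lambda>\<omega>. g (T \<omega>)) -` {l} \<inter> space M) = measure M (g -` {l} \<inter> space M)" for l
    unfolding fiber by (rule measure_vimage[OF simple_functionD(2)[OF g]])
  then show "simple_entropy M (\<lambda>\<omega>. g (T \<omega>)) = simple_entropy M g"
    unfolding simple_entropy_eq_sum_superset[OF fin img] by (simp add: simple_entropy_def)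
qed

text \<open>\<open>orbit_block g n \<omega>\<close> is the \<open>g\<close>-itinerary of \<open>\<omega>\<close> of length \<open>n\<close>; its fibres form the
  refinement \<open>P\<^sub>n\<close> of the partition \<open>P\<close> into fibres of \<open>g\<close>.\<close>
definition orbit_block :: "('a \<Rightarrow> 'b) \<Rightarrow> nat \<Rightarrow> 'a \<Rightarrow> 'b list" where
  "orbit_block g n \<omega> = map (\<lambda>j. g ((T ^^ j) \<omega>)) [0..<n]"

lemma orbit_block_Suc: "orbit_block g (Suc n) \<omega> = g \<omega> # orbit_block g n (T \<omega>)"
  unfolding orbit_block_def map_upt_Suc by (simp add: funpow_Suc_right del: funpow.simps)

lemma take_orbit_block: "take n (orbit_block g (Suc n) \<omega>) = orbit_block g n \<omega>"
  unfolding orbit_block_def by (simp add: take_map)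

lemma simple_function_orbit_block:
  assumes g: "simple_function M g"
  shows "simple_function M (orbit_block g n)"
proof (induction n)
  case 0
  then show ?case by (simp add: orbit_block_def)
next
  case (Suc n)
  then have "simple_function M (\<lambda>\<omega>. (g \<omega>, orbit_block g n (T \<omega>)))"
    by (intro simple_function_Pair g simple_function_comp_T)
  then have "simple_function M (\<lambda>\<omega>. case (g \<omega>, orbit_block g n (T \<omega>)) of (a, l) \<Rightarrow> a # l)"
    by (rule simple_function_compose1)
  then show ?case by (simp add: orbit_block_Suc[abs_def])
qed

lemma refine_part_fibers:
  "refine_part M T ((\<lambda>l. g -` {l} \<inter> space M) ` L) n =
     (\<lambda>ls. orbit_block g n -` {ls} \<inter> space M) ` {ls. set ls \<subseteq> L \<and> length ls = n}"
  (is "?lhs = ?rhs")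
proof -
  let ?F = "\<lambda>l. g -` {l} \<inter> space M"
  have cell: "(\<Inter>j<n. (T ^^ j) -` ?F (c j)) \<inter> space M = orbit_block g n -` {map c [0..<n]} \<inter> space M"
    for c
    using funpow_in_space by (auto simp: orbit_block_def list_eq_iff_nth_eq)
  show ?thesis
  proof (intro subsetI antisym)
    fix A assume "A \<in> ?lhs"
    then obtain a where A: "A = (\<Inter>j<n. (T ^^ j) -` a j) \<inter> space M" and "\<forall>j<n. a j \<in> ?F ` L"
      unfolding refine_part_def by blast
    then have "\<forall>j\<in>{..<n}. \<exists>l. l \<in> L \<and> a j = ?F l" by blast
    then obtain c where c: "\<forall>j\<in>{..<n}. c j \<in> L \<and> a j = ?F (c j)" by (metis bchoice)
    then have "(\<Inter>j<n. (T ^^ j) -` a j) = (\<Inter>j<n. (T ^^ j) -` ?F (c j))" by simp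
    then have "A = orbit_block g n -` {map c [0..<n]} \<inter> space M"
      unfolding A cell[symmetric] by simp
    moreover have "set (map c [0..<n]) \<subseteq> L" using c by auto
    ultimately show "A \<in> ?rhs" by (intro image_eqI[where x="map c [0..<n]"]) auto
  next
    fix A assume "A \<in> ?rhs"
    then obtain ls where A: "A = orbit_block g n -` {ls} \<inter> space M" and ls: "set ls \<subseteq> L" "length ls = n"
      by blast
    have "A = (\<Inter>j<n. (T ^^ j) -` ?F (ls ! j)) \<inter> space M"
      unfolding A cell using ls(2) map_nth[of ls] by simp
    moreover have "ls ! j \<in> L" if "j < n" for j using ls that by auto
    then have "\<forall>j<n. ?F (ls ! j) \<in> ?F ` L" by (intro allI impI image_eqI[OF refl])
    ultimately show "A \<in> ?lhs"
      unfolding refine_part_def by (intro CollectI exI[where x="\<lambda>j. ?F (ls ! j)"]) simp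
  qed
qed

lemma part_entropy_refine_part_fibers:
  assumes "finite L" "g ` space M \<subseteq> L"
  shows "part_entropy M (refine_part M T ((\<lambda>l. g -` {l} \<inter> space M) ` L) n) =
    simple_entropy M (orbit_block g n)"
  unfolding refine_part_fibers
proof (rule part_entropy_fibers)
  show "finite {ls. set ls \<subseteq> L \<and> length ls = n}" by (rule finite_lists_length_eq[OF assms(1)])
  show "orbit_block g n ` space M \<subseteq> {ls. set ls \<subseteq> L \<and> length ls = n}"
    using assms(2) by (auto simp: orbit_block_def intro!: subsetD[OF assms(2)] funpow_in_space)
qed

lemma simple_entropy_orbit_block_1: "simple_entropy M (orbit_block g 1) = simple_entropy M g"
proof -
  have "simple_entropy M (orbit_block g 1) = simple_entropy M (\<lambda>\<omega>. [g \<omega>])"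
    by (rule simple_entropy_cong) (simp add: orbit_block_def)
  also have "\<dots> = simple_entropy M g" by (rule simple_entropy_comp_inj) (auto simp: inj_on_def)
  finally show ?thesis .
qed

lemma simple_entropy_orbit_block_Suc_diff:
  assumes g: "simple_function M g"
  shows "simple_entropy M (orbit_block g (Suc n)) - simple_entropy M (orbit_block g n) =
    cond_simple_entropy M g (\<lambda>\<omega>. orbit_block g n (T \<omega>))"
proof -
  have "simple_entropy M (orbit_block g (Suc n)) =
      simple_entropy M (\<lambda>\<omega>. case_prod Cons (g \<omega>, orbit_block g n (T \<omega>)))"
    by (rule simple_entropy_cong) (simp add: orbit_block_Suc)
  also have "\<dots> = simple_entropy M (\<lambda>\<omega>. (g \<omega>, orbit_block g n (T \<omega>)))"
    by (rule simple_entropy_comp_inj) (auto simp: inj_on_def)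
  finally show ?thesis
    unfolding cond_simple_entropy_def
    using simple_entropy_comp_T[OF simple_function_orbit_block[OF g]] by simp
qed

lemma orbit_block_increment_antimono:
  assumes g: "simple_function M g"
  shows "simple_entropy M (orbit_block g (Suc (Suc n))) - simple_entropy M (orbit_block g (Suc n))
    \<le> simple_entropy M (orbit_block g (Suc n)) - simple_entropy M (orbit_block g n)"
proof -
  have "cond_simple_entropy M g (\<lambda>\<omega>. orbit_block g (Suc n) (T \<omega>))
      \<le> cond_simple_entropy M g (\<lambda>\<omega>. take n (orbit_block g (Suc n) (T \<omega>)))"
    by (intro cond_simple_entropy_comp_ge finite_measure_axioms g
        simple_function_comp_T simple_function_orbit_block)
  then show ?thesis
    unfolding simple_entropy_orbit_block_Suc_diff[OF g] take_orbit_block .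
qed

lemma orbit_block_increment_nonneg:
  assumes g: "simple_function M g"
  shows "0 \<le> simple_entropy M (orbit_block g (Suc n)) - simple_entropy M (orbit_block g n)"
  unfolding simple_entropy_orbit_block_Suc_diff[OF g]
  by (intro cond_simple_entropy_nonneg finite_measure_axioms g
      simple_function_comp_T simple_function_orbit_block)

text \<open>The entropy increments \<open>H(P\<^sub>n\<^sub>+\<^sub>1) - H(P\<^sub>n)\<close> decrease, so their limit \<open>h(T, P)\<close> is
  bounded by the increment at \<open>n = 1\<close>.\<close>
lemma ent_rel_le_refine_part_2:
  assumes g: "simple_function M g" and L: "finite L" "g ` space M \<subseteq> L"
  defines "P \<equiv> (\<lambda>l. g -` {l} \<inter> space M) ` L"
  shows "ent_rel M T P \<le> part_entropy M (refine_part M T P 2) - part_entropy M P"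
proof -
  define D where "D n = simple_entropy M (orbit_block g (Suc n)) - simple_entropy M (orbit_block g n)" for n
  have "decseq D" unfolding D_def by (intro decseq_SucI orbit_block_increment_antimono[OF g])
  moreover have "\<forall>n. 0 \<le> D n" unfolding D_def using orbit_block_increment_nonneg[OF g] by blast
  ultimately obtain h where h: "D \<longlonglongrightarrow> h" "\<forall>n. h \<le> D n" by (rule decseq_convergent)
  have "ent_rel M T P = h"
    unfolding ent_rel_def P_def part_entropy_refine_part_fibers[OF L] D_def[symmetric] using h(1) by (rule limI)
  also have "\<dots> \<le> D 1" using h(2) by blast
  also have "\<dots> = part_entropy M (refine_part M T P 2) - part_entropy M P"
    unfolding D_def P_def part_entropy_refine_part_fibers[OF L]
    using part_entropy_fibers[OF L] simple_entropy_orbit_block_1 by (simp add: numeral_2_eq_2)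
  finally show ?thesis .
qed

end

section \<open>Ordinal patterns\<close>

text \<open>\<open>pattern_precedes x a b\<close>: index \<open>a\<close> comes before \<open>b\<close> in the ordinal pattern of \<open>x\<close>,
  i.e. \<open>x a > x b\<close>, ties being broken in favour of the larger index.\<close>
definition pattern_precedes :: "(nat \<Rightarrow> real) \<Rightarrow> nat \<Rightarrow> nat \<Rightarrow> bool" where
  "pattern_precedes x a b \<longleftrightarrow> [x b, real b] < [x a, real a]"

definition ord_pattern :: "(nat \<Rightarrow> real) \<Rightarrow> nat \<Rightarrow> nat list" where
  "ord_pattern x d = rev (sort_key (\<lambda>a. [x a, real a]) [0..<Suc d])"

lemma pattern_precedes_iff: "pattern_precedes x a b \<longleftrightarrow> x b < x a \<or> (x b = x a \<and> b < a)"
  unfolding pattern_precedes_def by auto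

lemma length_perms: "r \<in> perms d \<Longrightarrow> length r = Suc d"
  unfolding perms_def using distinct_card[of r] by auto

lemma finite_perms: "finite (perms d)"
proof (rule finite_subset)
  show "perms d \<subseteq> {xs. set xs \<subseteq> {0..d} \<and> length xs = Suc d}"
    using length_perms unfolding perms_def by auto
qed (rule finite_lists_length_eq, simp)

lemma has_ord_pattern_iff_sorted:
  "has_ord_pattern x d r \<longleftrightarrow> r \<in> perms d \<and> sorted_wrt (pattern_precedes x) r"
proof (cases "r \<in> perms d")
  case True
  have "transp (pattern_precedes x)" by (auto simp: transp_def pattern_precedes_iff)
  then have "sorted_wrt (pattern_precedes x) r \<longleftrightarrow>
      (\<forall>i. Suc i < length r \<longrightarrow> pattern_precedes x (r ! i) (r ! Suc i))"
    by (rule sorted_wrt_iff_nth_Suc_transp)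
  also have "\<dots> \<longleftrightarrow> (\<forall>l\<in>{1..d}. pattern_precedes x (r ! (l - 1)) (r ! l))"
    unfolding length_perms[OF True] image_Suc_lessThan[symmetric] by auto
  finally show ?thesis
    using True unfolding has_ord_pattern_def pattern_precedes_iff by auto
qed (simp add: has_ord_pattern_def)

lemma ord_pattern_unique:
  assumes "r \<in> perms d" "sorted_wrt (pattern_precedes x) r"
    and "r' \<in> perms d" "sorted_wrt (pattern_precedes x) r'"
  shows "r = r'"
proof -
  let ?k = "\<lambda>a::nat. [x a, real a]"
  have "sorted_wrt (<) (map ?k (rev r))" "sorted_wrt (<) (map ?k (rev r'))"
    using assms by (simp_all add: sorted_wrt_map sorted_wrt_rev pattern_precedes_def[abs_def])
  then have "map ?k (rev r) = map ?k (rev r')"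
    using assms(1,3) unfolding strict_sorted_iff perms_def
    by (intro sorted_distinct_set_unique) auto
  moreover have "inj ?k" by (auto simp: inj_def)
  ultimately show ?thesis by simp
qed

lemma ord_pattern_sorted: "ord_pattern x d \<in> perms d \<and> sorted_wrt (pattern_precedes x) (ord_pattern x d)"
proof -
  let ?k = "\<lambda>a::nat. [x a, real a]"
  let ?L = "sort_key ?k [0..<Suc d]"
  have "distinct (map ?k ?L)" by (simp add: distinct_map inj_on_def)
  then have "sorted_wrt (<) (map ?k ?L)" by (simp add: strict_sorted_iff)
  then show ?thesis
    unfolding ord_pattern_def perms_def by (auto simp: sorted_wrt_map sorted_wrt_rev pattern_precedes_def)
qed

lemma ord_pattern_in_perms: "ord_pattern x d \<in> perms d"
  using ord_pattern_sorted by blast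

lemma has_ord_pattern_iff: "has_ord_pattern x d r \<longleftrightarrow> r = ord_pattern x d"
  using has_ord_pattern_iff_sorted ord_pattern_unique ord_pattern_sorted by metis

lemma ord_pattern_eqI:
  assumes "r \<in> perms d" "sorted_wrt (pattern_precedes x) r"
  shows "ord_pattern x d = r"
  using ord_pattern_unique[OF _ _ assms] ord_pattern_sorted by blast

lemma ord_pattern_cong:
  assumes "\<And>k. k \<le> d \<Longrightarrow> x k = x' k"
  shows "ord_pattern x d = ord_pattern x' d"
proof (rule ord_pattern_eqI)
  have "ord_pattern x' d \<in> perms d" "sorted_wrt (pattern_precedes x') (ord_pattern x' d)"
    using ord_pattern_sorted by auto
  then show "sorted_wrt (pattern_precedes x) (ord_pattern x' d)"
    by (elim sorted_wrt_mono_rel[rotated]) (use assms in \<open>auto simp: perms_def pattern_precedes_iff\<close>)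
qed (rule ord_pattern_in_perms)

lemma ord_pattern_take: "ord_pattern x d = filter (\<lambda>a. a \<le> d) (ord_pattern x (Suc d))"
proof (rule ord_pattern_eqI)
  have "ord_pattern x (Suc d) \<in> perms (Suc d)" "sorted_wrt (pattern_precedes x) (ord_pattern x (Suc d))"
    using ord_pattern_sorted by auto
  then show "filter (\<lambda>a. a \<le> d) (ord_pattern x (Suc d)) \<in> perms d"
    "sorted_wrt (pattern_precedes x) (filter (\<lambda>a. a \<le> d) (ord_pattern x (Suc d)))"
    unfolding perms_def by (auto simp: sorted_wrt_filter)
qed

lemma ord_pattern_drop:
  "ord_pattern (\<lambda>k. x (Suc k)) d = map (\<lambda>a. a - 1) (filter (\<lambda>a. 0 < a) (ord_pattern x (Suc d)))"
proof (rule ord_pattern_eqI)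
  let ?F = "filter (\<lambda>a. 0 < a) (ord_pattern x (Suc d))"
  have r: "ord_pattern x (Suc d) \<in> perms (Suc d)" "sorted_wrt (pattern_precedes x) (ord_pattern x (Suc d))"
    using ord_pattern_sorted by auto
  have "set (map (\<lambda>a. a - 1) ?F) = (\<lambda>a. a - 1) ` {1..Suc d}"
    using r(1) unfolding perms_def by (auto simp: atLeastAtMost_iff)
  also have "\<dots> = {0..d}"
    by (auto simp: image_iff intro!: bexI[where x="Suc _"])
  moreover have "inj_on (\<lambda>a. a - 1) (set ?F)" by (auto simp: inj_on_def)
  ultimately show "map (\<lambda>a. a - 1) ?F \<in> perms d"
    using r(1) unfolding perms_def by (simp add: distinct_map)
  have "sorted_wrt (pattern_precedes x) ?F" using r(2) by (simp add: sorted_wrt_filter)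
  then have "sorted_wrt (\<lambda>a b. pattern_precedes (\<lambda>k. x (Suc k)) (a - 1) (b - 1)) ?F"
    by (elim sorted_wrt_mono_rel[rotated]) (auto simp: pattern_precedes_iff)
  then show "sorted_wrt (pattern_precedes (\<lambda>k. x (Suc k))) (map (\<lambda>a. a - 1) ?F)"
    by (simp add: sorted_wrt_map)
qed

definition pattern_map :: "('a \<Rightarrow> 'a) \<Rightarrow> ('n::finite \<Rightarrow> 'a \<Rightarrow> real) \<Rightarrow> nat \<Rightarrow> 'a \<Rightarrow> ('n \<Rightarrow> nat list)" where
  "pattern_map T X d \<omega> = (\<lambda>i. ord_pattern (\<lambda>k. X i ((T ^^ (d - k)) \<omega>)) d)"

lemma pattern_map_in_perms: "pattern_map T X d \<omega> i \<in> perms d"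
  unfolding pattern_map_def by (rule ord_pattern_in_perms)

lemma finite_pattern_maps: "finite (UNIV \<rightarrow>\<^sub>E perms d :: ('n::finite \<Rightarrow> nat list) set)"
  by (simp add: finite_PiE finite_perms)

lemma ord_part_eq_fibers:
  "ord_part M T X d = (\<lambda>\<pi>. pattern_map T X d -` {\<pi>} \<inter> space M) ` (UNIV \<rightarrow>\<^sub>E perms d)"
proof -
  have "{\<omega> \<in> space M. \<forall>i. has_ord_pattern (\<lambda>k. X i ((T ^^ (d - k)) \<omega>)) d (\<pi> i)} =
      pattern_map T X d -` {\<pi>} \<inter> space M" for \<pi>
    unfolding pattern_map_def has_ord_pattern_iff by (auto simp: fun_eq_iff)
  then show ?thesis unfolding ord_part_def by (auto simp: PiE_iff)
qed

lemma part_entropy_ord_part: "part_entropy M (ord_part M T X d) = simple_entropy M (pattern_map T X d)"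
  unfolding ord_part_eq_fibers
  by (rule part_entropy_fibers[OF finite_pattern_maps]) (auto simp: pattern_map_in_perms PiE_iff)

lemma pred_has_ord_pattern:
  assumes [measurable]: "\<And>k. v k \<in> borel_measurable M"
  shows "Measurable.pred M (\<lambda>\<omega>. has_ord_pattern (\<lambda>k. v k \<omega>) d r)"
  unfolding has_ord_pattern_def by measurable

text \<open>In \<open>pattern_map\<close> time runs backwards (index \<open>k\<close> is \<open>T\<^bsup>d-k\<^esup>\<close>), so the window of
  length \<open>d + 1\<close> at \<open>\<omega>\<close> is the one of length \<open>d + 2\<close> with its index \<open>0\<close> dropped, and the
  window at \<open>T \<omega>\<close> is the one with its last index dropped.\<close>
lemma pattern_map_eq_drop:
  "pattern_map T X d \<omega> = (\<lambda>i. map (\<lambda>a. a - 1) (filter (\<lambda>a. 0 < a) (pattern_map T X (Suc d) \<omega> i)))"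
  unfolding pattern_map_def
  using ord_pattern_drop[of "\<lambda>k. X i ((T ^^ (Suc d - k)) \<omega>)" d for i] by simp

lemma pattern_map_T_eq_take:
  "pattern_map T X d (T \<omega>) = (\<lambda>i. filter (\<lambda>a. a \<le> d) (pattern_map T X (Suc d) \<omega> i))"
proof
  fix i
  have "ord_pattern (\<lambda>k. X i ((T ^^ (d - k)) (T \<omega>))) d = ord_pattern (\<lambda>k. X i ((T ^^ (Suc d - k)) \<omega>)) d"
  proof (rule ord_pattern_cong)
    fix k assume "k \<le> d"
    then have "Suc d - k = Suc (d - k)" by simp
    then show "X i ((T ^^ (d - k)) (T \<omega>)) = X i ((T ^^ (Suc d - k)) \<omega>)"
      by (simp only: funpow_Suc_right comp_def)
  qed
  then show "pattern_map T X d (T \<omega>) i = filter (\<lambda>a. a \<le> d) (pattern_map T X (Suc d) \<omega> i)"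
    unfolding pattern_map_def using ord_pattern_take[of "\<lambda>k. X i ((T ^^ (Suc d - k)) \<omega>)" d] by simp
qed

context measure_preserving
begin

lemma simple_function_pattern_map:
  assumes X: "\<And>i. X i \<in> borel_measurable M"
  shows "simple_function M (pattern_map T X d)"
  unfolding simple_function_def
proof
  show "finite (pattern_map T X d ` space M)"
    by (rule finite_subset[OF _ finite_pattern_maps[of d]]) (auto simp: pattern_map_in_perms PiE_iff)
  have "(\<lambda>\<omega>. X i ((T ^^ m) \<omega>)) \<in> borel_measurable M" for i m
    using measurable_compose[OF measurable_funpow X] .
  then have [measurable]: "Measurable.pred M (\<lambda>\<omega>. has_ord_pattern (\<lambda>k. X i ((T ^^ (d - k)) \<omega>)) d r)"
    for i r
    by (intro pred_has_ord_pattern)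
  show "\<forall>\<pi>\<in>pattern_map T X d ` space M. pattern_map T X d -` {\<pi>} \<inter> space M \<in> sets M"
  proof
    fix \<pi>
    have "pattern_map T X d -` {\<pi>} \<inter> space M =
        {\<omega> \<in> space M. \<forall>i. has_ord_pattern (\<lambda>k. X i ((T ^^ (d - k)) \<omega>)) d (\<pi> i)}"
      unfolding pattern_map_def has_ord_pattern_iff by (auto simp: fun_eq_iff)
    also have "\<dots> \<in> sets M" by measurable
    finally show "pattern_map T X d -` {\<pi>} \<inter> space M \<in> sets M" .
  qed
qed

lemma part_entropy_refine_ord_part:
  "part_entropy M (refine_part M T (ord_part M T X d) n) = simple_entropy M (orbit_block (pattern_map T X d) n)"
  unfolding ord_part_eq_fibers
  by (rule part_entropy_refine_part_fibers[OF finite_pattern_maps]) (auto simp: pattern_map_in_perms PiE_iff)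

lemma ent_rel_ord_part_le_cond_entropy:
  assumes X: "\<And>i. X i \<in> borel_measurable M"
  shows "ent_rel M T (ord_part M T X d) \<le> cond_entropy M T X d"
  unfolding cond_entropy_def ord_part_eq_fibers
  by (intro ent_rel_le_refine_part_2 simple_function_pattern_map X finite_pattern_maps)
    (auto simp: pattern_map_in_perms PiE_iff)

lemma cond_entropy_le_sorting_entropy:
  fixes X :: "'n::finite \<Rightarrow> 'a \<Rightarrow> real"
  assumes X: "\<And>i. X i \<in> borel_measurable M"
  shows "cond_entropy M T X d \<le> sorting_entropy M T X d"
proof -
  define F :: "('n \<Rightarrow> nat list) \<Rightarrow> ('n \<Rightarrow> nat list) list" where
    "F \<pi> = [\<lambda>i. map (\<lambda>a. a - 1) (filter (\<lambda>a. 0 < a) (\<pi> i)), \<lambda>i. filter (\<lambda>a. a \<le> d) (\<pi> i)]" for \<pi>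
  have "simple_entropy M (orbit_block (pattern_map T X d) 2) =
      simple_entropy M (\<lambda>\<omega>. F (pattern_map T X (Suc d) \<omega>))"
  proof (rule simple_entropy_cong)
    fix \<omega>
    have "orbit_block (pattern_map T X d) 2 \<omega> = [pattern_map T X d \<omega>, pattern_map T X d (T \<omega>)]"
      by (simp add: orbit_block_def numeral_2_eq_2)
    then show "orbit_block (pattern_map T X d) 2 \<omega> = F (pattern_map T X (Suc d) \<omega>)"
      unfolding F_def pattern_map_eq_drop[of T X d \<omega>] pattern_map_T_eq_take[of T X d \<omega>] .
  qed
  also have "\<dots> \<le> simple_entropy M (pattern_map T X (Suc d))"
    by (intro simple_entropy_comp_le finite_measure_axioms simple_function_pattern_map X)
  finally show ?thesis
    unfolding cond_entropy_def sorting_entropy_def part_entropy_refine_ord_part part_entropy_ord_part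
    by simp
qed

end

section \<open>Increments and averages of real sequences\<close>

lemma cesaro_mean_tendsto_zero:
  fixes b :: "nat \<Rightarrow> real"
  assumes b: "b \<longlonglongrightarrow> 0"
  shows "(\<lambda>n. (\<Sum>k<n. b k) / real n) \<longlonglongrightarrow> 0"
proof (rule LIMSEQ_I)
  fix e :: real assume e: "0 < e"
  obtain N where N: "\<And>k. k \<ge> N \<Longrightarrow> norm (b k) < e / 2"
    using LIMSEQ_D[OF b, of "e/2"] e by auto
  define C where "C = (\<Sum>k<N. \<bar>b k\<bar>)"
  obtain N' :: nat where N': "real N' > 2 * C / e" using reals_Archimedean2 by blast
  show "\<exists>n0. \<forall>n\<ge>n0. norm ((\<Sum>k<n. b k) / real n - 0) < e"
  proof (intro exI allI impI)
    fix n assume n: "n \<ge> max (max N N') 1"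
    then have "N \<le> n" "real n > 0" "real n > 2 * C / e" using N' by auto
    have "(\<Sum>k<n. b k) = (\<Sum>k<N. b k) + (\<Sum>k\<in>{N..<n}. b k)"
      using \<open>N \<le> n\<close> by (metis atLeast0LessThan sum.atLeastLessThan_concat zero_le)
    moreover have "\<bar>\<Sum>k<N. b k\<bar> \<le> C" unfolding C_def by (rule sum_abs)
    moreover have "\<bar>\<Sum>k\<in>{N..<n}. b k\<bar> \<le> (\<Sum>k\<in>{N..<n}. e / 2)"
      by (rule order_trans[OF sum_abs sum_mono]) (use N in \<open>auto intro: less_imp_le\<close>)
    moreover have "(\<Sum>k\<in>{N..<n}. e / 2) \<le> real n * (e / 2)" using e by simp
    moreover have "C < real n * (e / 2)" using \<open>real n > 2 * C / e\<close> e by (simp add: field_simps)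
    ultimately have "\<bar>\<Sum>k<n. b k\<bar> < real n * e" by linarith
    then show "norm ((\<Sum>k<n. b k) / real n - 0) < e"
      using \<open>real n > 0\<close> by (simp add: field_simps abs_divide)
  qed
qed

lemma average_tendsto_of_increments_tendsto:
  fixes H :: "nat \<Rightarrow> real"
  assumes "(\<lambda>d. H (Suc d) - H d) \<longlonglongrightarrow> L"
  shows "(\<lambda>d. H d / real d) \<longlonglongrightarrow> L"
proof (rule Lim_transform_eventually)
  have "(\<lambda>d. H (Suc d) - H d - L) \<longlonglongrightarrow> 0" using assms by (simp add: LIM_zero)
  from tendsto_add[OF tendsto_add[OF lim_const_over_n cesaro_mean_tendsto_zero[OF this]] tendsto_const]
  show "(\<lambda>d. H 0 / real d + (\<Sum>k<d. H (Suc k) - H k - L) / real d + L) \<longlonglongrightarrow> L"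
    by simp
  show "\<forall>\<^sub>F d in sequentially. H 0 / real d + (\<Sum>k<d. H (Suc k) - H k - L) / real d + L = H d / real d"
  proof (rule eventually_sequentiallyI[of 1])
    fix d :: nat assume "1 \<le> d"
    have "(\<Sum>k<d. H (Suc k) - H k - L) = H d - H 0 - real d * L"
      by (simp only: sum_subtractf[of "\<lambda>k. H (Suc k) - H k"] sum_lessThan_telescope) simp
    then show "H 0 / real d + (\<Sum>k<d. H (Suc k) - H k - L) / real d + L = H d / real d"
      using \<open>1 \<le> d\<close> by (simp add: diff_divide_distrib add_divide_distrib)
  qed
qed

lemma increment_le_average:
  fixes H :: "nat \<Rightarrow> real"
  assumes "0 < d" "H (Suc d) / real (Suc d) \<le> H d / real d"
  shows "H (Suc d) - H d \<le> H d / real d"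
proof -
  have "H (Suc d) \<le> real (Suc d) * (H d / real d)"
    using assms(2) by (simp add: divide_le_eq mult.commute del: of_nat_Suc)
  also have "\<dots> = H d + H d / real d" using assms(1) by (simp add: field_simps)
  finally show ?thesis by simp
qed

lemma limsup_increments_le_limsup_averages:
  fixes H :: "nat \<Rightarrow> real"
  assumes "(\<exists>d0. \<forall>d\<ge>d0. H (Suc d) / real (Suc d) \<le> H d / real d) \<or> convergent (\<lambda>d. H (Suc d) - H d)"
  shows "limsup (\<lambda>d. ereal (H (Suc d) - H d)) \<le> limsup (\<lambda>d. ereal (H d / real d))"
  using assms
proof
  assume "\<exists>d0. \<forall>d\<ge>d0. H (Suc d) / real (Suc d) \<le> H d / real d"
  then obtain d0 where "\<forall>d\<ge>d0. H (Suc d) / real (Suc d) \<le> H d / real d" by blast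
  then have "\<forall>d\<ge>max d0 1. ereal (H (Suc d) - H d) \<le> ereal (H d / real d)"
    using increment_le_average by simp
  then show ?thesis by (intro Limsup_mono eventually_sequentiallyI) blast
next
  assume "convergent (\<lambda>d. H (Suc d) - H d)"
  then obtain L where L: "(\<lambda>d. H (Suc d) - H d) \<longlonglongrightarrow> L" unfolding convergent_def by blast
  then have "(\<lambda>d. H d / real d) \<longlonglongrightarrow> L" by (rule average_tendsto_of_increments_tendsto)
  with L have "limsup (\<lambda>d. ereal (H (Suc d) - H d)) = L" "limsup (\<lambda>d. ereal (H d / real d)) = L"
    by (auto intro!: lim_imp_Limsup tendsto_ereal)
  then show ?thesis by simp
qed

lemma mpds_imp_measure_preserving: "mpds M T \<Longrightarrow> measure_preserving M T"
  unfolding mpds_def measure_preserving_def measure_preserving_axioms_def prob_space_def by auto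

theorem corollary1:
  fixes M :: "'a::topological_space measure" and T :: "'a \<Rightarrow> 'a"
    and X :: "'n::finite \<Rightarrow> 'a \<Rightarrow> real"
  assumes sys: "mpds M T"
    and X_meas: "\<And>i. X i \<in> borel_measurable M"
    and gen: "(\<lambda>d. ereal (ent_rel M T (ord_part M T X d))) \<longlonglongrightarrow> KS_entropy M T"
    and ab: "(\<exists>d0. \<forall>d\<ge>d0. perm_entropy M T X d \<ge> perm_entropy M T X (Suc d))
             \<or> convergent (\<lambda>d. sorting_entropy M T X d)"
    and perm: "KS_entropy M T = limsup (\<lambda>d. ereal (perm_entropy M T X d))"
  shows "KS_entropy M T = limsup (\<lambda>d. ereal (cond_entropy M T X d))"
proof -
  interpret measure_preserving M T using sys by (rule mpds_imp_measure_preserving)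
  have "KS_entropy M T = liminf (\<lambda>d. ereal (ent_rel M T (ord_part M T X d)))"
    using gen by (intro lim_imp_Liminf[symmetric]) auto
  also have "\<dots> \<le> liminf (\<lambda>d. ereal (cond_entropy M T X d))"
    by (intro Liminf_mono always_eventually allI) (simp add: ent_rel_ord_part_le_cond_entropy X_meas)
  also have "\<dots> \<le> limsup (\<lambda>d. ereal (cond_entropy M T X d))"
    by (rule Liminf_le_Limsup) simp
  finally have "KS_entropy M T \<le> limsup (\<lambda>d. ereal (cond_entropy M T X d))" .
  moreover have "limsup (\<lambda>d. ereal (cond_entropy M T X d)) \<le> limsup (\<lambda>d. ereal (sorting_entropy M T X d))"
    by (intro Limsup_mono always_eventually allI) (simp add: cond_entropy_le_sorting_entropy X_meas)
  moreover have "\<dots> \<le> KS_entropy M T"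
    using ab unfolding perm sorting_entropy_def perm_entropy_def
    by (rule limsup_increments_le_limsup_averages)
  ultimately show ?thesis by simp
qed

end
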